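(* Every $r$-graph whose underlying simple graph is the Wagner graph $V_8$ is of class $1$, i.e., its edge-chromatic number equals $r$.
   Context: Graphs may have parallel edges but no loops. An $r$-graph is an $r$-regular graph $G$ such that for every $X\subseteq V(G)$ of odd cardinality, at least $r$ edges have exactly one end in $X$. A graph is class $1$ if its edge-chromatic number (minimum number of colors in a proper edge-coloring) equals its maximum degree. The Wagner graph $V_8$ is the cubic graph obtained from a cycle $v_0v_1\cdots v_7v_0$ by adding the edges $v_iv_{i+4}$ for $i=0,1,2,3$. *)

theory Defs
  imports Main
begin

text \<open>A multigraph (parallel edges allowed, no loops) is given by a finite vertex set V,
  a finite edge set E and an incidence map ends assigning to each edge its two distinct ends.\<close>

definition multigraph :: "'v set \<Rightarrow> 'e set \<Rightarrow> ('e \<Rightarrow> 'v set) \<Rightarrow> bool" where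
  "multigraph V E ends \<longleftrightarrow> finite V \<and> finite E \<and>
     (\<forall>e\<in>E. ends e \<subseteq> V \<and> card (ends e) = 2)"

definition degree :: "'e set \<Rightarrow> ('e \<Rightarrow> 'v set) \<Rightarrow> 'v \<Rightarrow> nat" where
  "degree E ends v = card {e\<in>E. v \<in> ends e}"

definition cut :: "'e set \<Rightarrow> ('e \<Rightarrow> 'v set) \<Rightarrow> 'v set \<Rightarrow> 'e set" where
  "cut E ends X = {e\<in>E. card (ends e \<inter> X) = 1}"

definition r_graph :: "nat \<Rightarrow> 'v set \<Rightarrow> 'e set \<Rightarrow> ('e \<Rightarrow> 'v set) \<Rightarrow> bool" where
  "r_graph r V E ends \<longleftrightarrow> multigraph V E ends \<and>
     (\<forall>v\<in>V. degree E ends v = r) \<and>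
     (\<forall>X. X \<subseteq> V \<and> odd (card X) \<longrightarrow> card (cut E ends X) \<ge> r)"

definition adjacent :: "'e set \<Rightarrow> ('e \<Rightarrow> 'v set) \<Rightarrow> 'v \<Rightarrow> 'v \<Rightarrow> bool" where
  "adjacent E ends u v \<longleftrightarrow> (\<exists>e\<in>E. ends e = {u, v})"

text \<open>Wagner graph on vertices 0..7: cycle plus the four long diagonals.\<close>
definition wagner_adj :: "nat \<Rightarrow> nat \<Rightarrow> bool" where
  "wagner_adj i j \<longleftrightarrow> i < 8 \<and> j < 8 \<and>
     ((i + 1) mod 8 = j \<or> (j + 1) mod 8 = i \<or> (i + 4) mod 8 = j)"

definition underlying_is_wagner :: "'v set \<Rightarrow> 'e set \<Rightarrow> ('e \<Rightarrow> 'v set) \<Rightarrow> bool" where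
  "underlying_is_wagner V E ends \<longleftrightarrow>
     (\<exists>f. bij_betw f V {0..<8} \<and>
        (\<forall>u\<in>V. \<forall>v\<in>V. adjacent E ends u v \<longleftrightarrow> wagner_adj (f u) (f v)))"

definition proper_edge_colouring :: "'e set \<Rightarrow> ('e \<Rightarrow> 'v set) \<Rightarrow> ('e \<Rightarrow> nat) \<Rightarrow> nat \<Rightarrow> bool" where
  "proper_edge_colouring E ends c k \<longleftrightarrow>
     (\<forall>e\<in>E. c e < k) \<and>
     (\<forall>e\<in>E. \<forall>e'\<in>E. e \<noteq> e' \<and> ends e \<inter> ends e' \<noteq> {} \<longrightarrow> c e \<noteq> c e')"

definition edge_chromatic_number :: "'e set \<Rightarrow> ('e \<Rightarrow> 'v set) \<Rightarrow> nat" where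
  "edge_chromatic_number E ends = (LEAST k. \<exists>c. proper_edge_colouring E ends c k)"

end

theory Submission
  imports Defs "HOL-Library.Disjoint_Sets"
begin

text \<open>Relabel the vertices by those of \<open>V\<^sub>8\<close>, so that the ends of every edge form one of the
  twelve edges of \<open>V\<^sub>8\<close>, and let \<open>m T\<close> be the multiplicity of the edge \<open>T\<close>. The degree
  conditions force opposite rim edges to have equal multiplicity, and the cut conditions for the
  odd sets \<open>{j, j+1, j+2}\<close> give \<open>m {j, j+1} + m {j+1, j+2} \<le> r\<close>. These constraints make \<open>m\<close>
  a sum of \<open>r\<close> perfect matchings of \<open>V\<^sub>8\<close> (the two rim matchings, the spoke matching and the four
  matchings consisting of two consecutive spokes and two rim edges), and colouring every edge
  by a matching containing its type gives a proper \<open>r\<close>-edge-colouring. At least \<open>r\<close> colours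
  are needed at any vertex.\<close>

lemma degree_le_colours:
  assumes "proper_edge_colouring E ends c k"
  shows "degree E ends v \<le> k"
proof -
  let ?star = "{e\<in>E. v \<in> ends e}"
  have "inj_on c ?star"
    using assms by (auto simp: proper_edge_colouring_def intro!: inj_onI)
  moreover have "c ` ?star \<subseteq> {..<k}"
    using assms by (auto simp: proper_edge_colouring_def)
  ultimately have "card ?star \<le> card {..<k}"
    by (intro card_inj_on_le) auto
  then show ?thesis
    by (simp add: degree_def)
qed

lemma edge_chromatic_number_eqI:
  assumes "proper_edge_colouring E ends c k" and "degree E ends v = k"
  shows "edge_chromatic_number E ends = k"
  unfolding edge_chromatic_number_def
proof (rule Least_equality)
  show "\<exists>c. proper_edge_colouring E ends c k"
    using assms(1) by blast
  show "k \<le> k'" if "\<exists>c'. proper_edge_colouring E ends c' k'" for k'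
    using that degree_le_colours assms(2) by metis
qed

lemma proper_edge_colouring_relabel:
  assumes "proper_edge_colouring E (\<lambda>e. f ` ends e) c k"
  shows "proper_edge_colouring E ends c k"
  using assms unfolding proper_edge_colouring_def by blast

lemma r_graph_relabel:
  assumes f: "bij_betw f V W" and G: "r_graph r V E ends"
  shows "r_graph r W E (\<lambda>e. f ` ends e)"
proof -
  have inj: "inj_on f V" and W: "W = f ` V"
    using f by (auto simp: bij_betw_def)
  have mg: "multigraph V E ends" and deg: "\<forall>v\<in>V. degree E ends v = r"
    and cut: "\<And>X. X \<subseteq> V \<Longrightarrow> odd (card X) \<Longrightarrow> r \<le> card (cut E ends X)"
    using G by (auto simp: r_graph_def)
  have ends: "\<And>e. e \<in> E \<Longrightarrow> ends e \<subseteq> V"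
    using mg by (simp add: multigraph_def)
  have card_image_Int: "card (f ` ends e \<inter> f ` X) = card (ends e \<inter> X)"
    if "e \<in> E" "X \<subseteq> V" for e X
    using that ends inj
    by (subst inj_on_image_Int[OF inj, symmetric]) (auto intro!: card_image inj_on_subset[OF inj])
  have "card (f ` ends e) = card (ends e)" if "e \<in> E" for e
    using that ends by (meson card_image inj inj_on_subset)
  then have "multigraph W E (\<lambda>e. f ` ends e)"
    using mg ends unfolding multigraph_def W by auto
  moreover have "degree E (\<lambda>e. f ` ends e) w = r" if "w \<in> W" for w
  proof -
    obtain v where v: "v \<in> V" "w = f v"
      using \<open>w \<in> W\<close> W by blast
    have "{e\<in>E. f v \<in> f ` ends e} = {e\<in>E. v \<in> ends e}"
      using v ends inj_on_image_mem_iff[OF inj] by blast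
    then show ?thesis
      using deg v by (simp add: degree_def)
  qed
  moreover have "r \<le> card (cut E (\<lambda>e. f ` ends e) X)" if "X \<subseteq> W" "odd (card X)" for X
  proof -
    obtain Y where Y: "Y \<subseteq> V" "X = f ` Y"
      using \<open>X \<subseteq> W\<close> W by (auto simp: subset_image_iff)
    have "card Y = card X"
      using Y inj by (simp add: card_image inj_on_subset)
    moreover have "cut E (\<lambda>e. f ` ends e) X = cut E ends Y"
      using Y card_image_Int unfolding cut_def by auto
    ultimately show ?thesis
      using cut Y \<open>odd (card X)\<close> by simp
  qed
  ultimately show ?thesis
    by (simp add: r_graph_def)
qed

lemma card_edges_by_ends:
  assumes "finite E" "finite S" "\<forall>e\<in>E. ends e \<in> S"
  shows "card {e\<in>E. P (ends e)} = (\<Sum>T | T \<in> S \<and> P T. card {e\<in>E. ends e = T})"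
proof -
  have "card {e\<in>E. P (ends e)} = card (\<Union>T\<in>{T \<in> S. P T}. {e\<in>E. ends e = T})"
    using assms(3) by (intro arg_cong[where f = card]) auto
  also have "\<dots> = (\<Sum>T | T \<in> S \<and> P T. card {e\<in>E. ends e = T})"
    using assms(1,2) by (intro card_UN_disjoint) auto
  finally show ?thesis .
qed

text \<open>Each class of parallel edges is mapped bijectively onto the indices of the matchings in
  \<open>L\<close> containing their common ends.\<close>

lemma proper_edge_colouring_from_matchings:
  assumes "finite E" and L: "\<forall>M\<in>set L. disjoint M"
    and mult: "\<And>e. e \<in> E \<Longrightarrow> card {e'\<in>E. ends e' = ends e} = length (filter (\<lambda>M. ends e \<in> M) L)"
  shows "\<exists>c. proper_edge_colouring E ends c (length L)"
proof -
  have "\<exists>h. bij_betw h {e'\<in>E. ends e' = T} {i. i < length L \<and> T \<in> L ! i}" if "T \<in> ends ` E" for T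
    using that \<open>finite E\<close> mult by (intro finite_same_card_bij) (auto simp: length_filter_conv_card)
  then obtain H where H: "\<And>T. T \<in> ends ` E \<Longrightarrow>
      bij_betw (H T) {e'\<in>E. ends e' = T} {i. i < length L \<and> T \<in> L ! i}"
    by metis
  define c where "c e = H (ends e) e" for e
  have c: "c e < length L" "ends e \<in> L ! c e" if "e \<in> E" for e
    using bij_betwE[OF H[of "ends e"]] that by (auto simp: c_def)
  have "c e \<noteq> c e'" if "e \<in> E" "e' \<in> E" "e \<noteq> e'" "ends e \<inter> ends e' \<noteq> {}" for e e'
  proof
    assume same: "c e = c e'"
    show False
    proof (cases "ends e = ends e'")
      case True
      then show False
        using bij_betw_imp_inj_on[OF H[of "ends e"]] that same by (auto simp: c_def inj_on_def)
    next
      case False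
      have "disjoint (L ! c e)"
        using L c(1)[OF \<open>e \<in> E\<close>] by simp
      then show False
        using c(2) that same False by (metis disjoint_def)
    qed
  qed
  then have "proper_edge_colouring E ends c (length L)"
    using c(1) by (simp add: proper_edge_colouring_def)
  then show ?thesis
    by blast
qed

definition wagner_edges :: "nat set set" where
  "wagner_edges = {{0,1}, {1,2}, {2,3}, {3,4}, {4,5}, {5,6}, {6,7}, {7,0},
                   {0,4}, {1,5}, {2,6}, {3,7}}"

lemma finite_wagner_edges: "finite wagner_edges"
  by (simp add: wagner_edges_def)

lemma wagner_adj_imp_wagner_edge:
  assumes "wagner_adj i j"
  shows "{i, j} \<in> wagner_edges"
proof -
  have "i < 8" "j < 8"
    using assms by (auto simp: wagner_adj_def)
  then have "i = 0 \<or> i = 1 \<or> i = 2 \<or> i = 3 \<or> i = 4 \<or> i = 5 \<or> i = 6 \<or> i = 7"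
    and "j = 0 \<or> j = 1 \<or> j = 2 \<or> j = 3 \<or> j = 4 \<or> j = 5 \<or> j = 6 \<or> j = 7"
    by auto
  then show ?thesis
    using assms unfolding wagner_adj_def wagner_edges_def
    by (elim disjE) (simp_all add: doubleton_eq_iff)
qed

lemma underlying_is_wagner_relabel:
  assumes "multigraph V E ends" and "underlying_is_wagner V E ends"
  obtains f where "bij_betw f V {0..<8}" and "\<forall>e\<in>E. f ` ends e \<in> wagner_edges"
proof -
  obtain f where f: "bij_betw f V {0..<8}"
    and adj: "\<forall>u\<in>V. \<forall>v\<in>V. adjacent E ends u v \<longleftrightarrow> wagner_adj (f u) (f v)"
    using assms(2) unfolding underlying_is_wagner_def by blast
  have "f ` ends e \<in> wagner_edges" if "e \<in> E" for e
  proof -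
    have "ends e \<subseteq> V" "card (ends e) = 2"
      using assms(1) that by (auto simp: multigraph_def)
    then obtain u v where uv: "ends e = {u, v}" "u \<in> V" "v \<in> V"
      by (auto simp: card_2_iff)
    then have "adjacent E ends u v"
      using that by (auto simp: adjacent_def)
    then show ?thesis
      using adj uv wagner_adj_imp_wagner_edge by auto
  qed
  then show thesis
    using f that by blast
qed

lemma sum_wagner_edges_if:
  "(\<Sum>T | T \<in> wagner_edges \<and> P T. m T) = (\<Sum>T\<in>wagner_edges. if P T then m T else 0)"
  using sum.inter_filter[OF finite_wagner_edges] by simp

lemma sum_wagner_edges:
  "(\<Sum>T\<in>wagner_edges. g T) =
     g {0,1} + g {1,2} + g {2,3} + g {3,4} + g {4,5} + g {5,6} + g {6,7} + g {7,0} +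
     g {0,4} + g {1,5} + g {2,6} + g {3,7}"
  by (simp add: wagner_edges_def doubleton_eq_iff add_ac)

definition rim_matching_even :: "nat set set" where
  "rim_matching_even = {{0,1}, {2,3}, {4,5}, {6,7}}"

definition rim_matching_odd :: "nat set set" where
  "rim_matching_odd = {{1,2}, {3,4}, {5,6}, {7,0}}"

definition spoke_matching :: "nat set set" where
  "spoke_matching = {{0,4}, {1,5}, {2,6}, {3,7}}"

definition spoke_pair_matching_01 :: "nat set set" where
  "spoke_pair_matching_01 = {{0,4}, {1,5}, {2,3}, {6,7}}"

definition spoke_pair_matching_12 :: "nat set set" where
  "spoke_pair_matching_12 = {{1,5}, {2,6}, {3,4}, {7,0}}"

definition spoke_pair_matching_23 :: "nat set set" where
  "spoke_pair_matching_23 = {{2,6}, {3,7}, {4,5}, {0,1}}"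

definition spoke_pair_matching_30 :: "nat set set" where
  "spoke_pair_matching_30 = {{3,7}, {0,4}, {5,6}, {1,2}}"

lemmas wagner_matching_defs = rim_matching_even_def rim_matching_odd_def spoke_matching_def
  spoke_pair_matching_01_def spoke_pair_matching_12_def spoke_pair_matching_23_def
  spoke_pair_matching_30_def

lemma disjoint_wagner_matchings:
  "disjoint rim_matching_even" "disjoint rim_matching_odd" "disjoint spoke_matching"
  "disjoint spoke_pair_matching_01" "disjoint spoke_pair_matching_12"
  "disjoint spoke_pair_matching_23" "disjoint spoke_pair_matching_30"
  by (simp_all add: wagner_matching_defs pairwise_insert disjnt_def conj_disj_distribR imp_disjL
      all_conj_distrib)

lemma wagner_weighting_constraints:
  fixes m :: "nat set \<Rightarrow> nat"
  assumes deg: "\<And>i. i < 8 \<Longrightarrow> (\<Sum>T | T \<in> wagner_edges \<and> i \<in> T. m T) = r"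
    and cut: "\<And>j. j < 4 \<Longrightarrow> r \<le> (\<Sum>T | T \<in> wagner_edges \<and> card (T \<inter> {j, j+1, j+2}) = 1. m T)"
  shows "m {4,5} = m {0,1}" "m {5,6} = m {1,2}" "m {6,7} = m {2,3}" "m {7,0} = m {3,4}"
    and "m {0,1} + m {1,2} \<le> r" "m {1,2} + m {2,3} \<le> r" "m {2,3} + m {3,4} \<le> r"
      "m {3,4} + m {0,1} \<le> r"
    and "m {0,1} + m {3,4} + m {0,4} = r" "m {0,1} + m {1,2} + m {1,5} = r"
      "m {1,2} + m {2,3} + m {2,6} = r" "m {2,3} + m {3,4} + m {3,7} = r"
  using deg[of 0] deg[of 1] deg[of 2] deg[of 3] deg[of 4] deg[of 5] deg[of 6] deg[of 7]
    cut[of 0] cut[of 1] cut[of 2] cut[of 3]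
  by (simp_all add: sum_wagner_edges_if sum_wagner_edges)

lemma wagner_weighting_decomposition:
  fixes m :: "nat set \<Rightarrow> nat"
  assumes opposite_rims:
      "m {4,5} = m {0,1}" "m {5,6} = m {1,2}" "m {6,7} = m {2,3}" "m {7,0} = m {3,4}"
    and adjacent_rims: "m {0,1} + m {1,2} \<le> r" "m {1,2} + m {2,3} \<le> r" "m {2,3} + m {3,4} \<le> r"
      "m {3,4} + m {0,1} \<le> r"
    and spokes: "m {0,1} + m {3,4} + m {0,4} = r" "m {0,1} + m {1,2} + m {1,5} = r"
      "m {1,2} + m {2,3} + m {2,6} = r" "m {2,3} + m {3,4} + m {3,7} = r"
  obtains L where "length L = r" and "\<forall>M\<in>set L. disjoint M"
    and "\<forall>T\<in>wagner_edges. m T = length (filter (\<lambda>M. T \<in> M) L)"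
proof -
  (* Each rim matching is used as often as both of its edges among {0,1}, ..., {3,4} allow, and
     the excess of the heavier one is covered by the spoke pair matching through it; by the
     adjacent-rim bounds these are at most r matchings, and the spoke matching fills up the rest.
     The spoke equations then make the spoke multiplicities come out right. *)
  define x0 where "x0 = min (m {0,1}) (m {2,3})"
  define x1 where "x1 = min (m {1,2}) (m {3,4})"
  define y01 where "y01 = m {2,3} - x0"
  define y12 where "y12 = m {3,4} - x1"
  define y23 where "y23 = m {0,1} - x0"
  define y30 where "y30 = m {1,2} - x1"
  define z where "z = r - (x0 + x1 + y01 + y12 + y23 + y30)"
  have rims_split: "x0 + y23 = m {0,1}" "x0 + y01 = m {2,3}" "x1 + y30 = m {1,2}" "x1 + y12 = m {3,4}"
    unfolding x0_def x1_def y01_def y12_def y23_def y30_def by auto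
  have total: "z + x0 + x1 + y01 + y12 + y23 + y30 = r"
    using adjacent_rims unfolding z_def x0_def x1_def y01_def y12_def y23_def y30_def
    by (auto simp: min_def)
  define L where "L = replicate x0 rim_matching_even @ replicate x1 rim_matching_odd
     @ replicate y01 spoke_pair_matching_01 @ replicate y12 spoke_pair_matching_12
     @ replicate y23 spoke_pair_matching_23 @ replicate y30 spoke_pair_matching_30
     @ replicate z spoke_matching"
  have "length L = r"
    using total by (simp add: L_def)
  moreover have "\<forall>M\<in>set L. disjoint M"
    by (auto simp: L_def disjoint_wagner_matchings)
  moreover have "\<forall>T\<in>wagner_edges. m T = length (filter (\<lambda>M. T \<in> M) L)"
    unfolding wagner_edges_def ball_simps using total spokes opposite_rims rims_split
    by (intro conjI; simp add: L_def wagner_matching_defs doubleton_eq_iff; linarith)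
  ultimately show thesis
    using that by blast
qed

lemma r_graph_wagner_matching_decomposition:
  assumes G: "r_graph r {0..<8} E ends" and wagner: "\<forall>e\<in>E. ends e \<in> wagner_edges"
  obtains L where "length L = r" and "\<forall>M\<in>set L. disjoint M"
    and "\<And>e. e \<in> E \<Longrightarrow> card {e'\<in>E. ends e' = ends e} = length (filter (\<lambda>M. ends e \<in> M) L)"
proof -
  have "finite E"
    using G by (simp add: r_graph_def multigraph_def)
  note by_ends = card_edges_by_ends[OF this finite_wagner_edges wagner]
  have deg: "(\<Sum>T | T \<in> wagner_edges \<and> i \<in> T. card {e\<in>E. ends e = T}) = r" if "i < 8" for i
  proof -
    have "degree E ends i = r"
      using G that by (simp add: r_graph_def)
    then show ?thesis
      using by_ends by (simp add: degree_def)
  qed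
  have cut: "r \<le> (\<Sum>T | T \<in> wagner_edges \<and> card (T \<inter> {j, j+1, j+2}) = 1.
      card {e\<in>E. ends e = T})" if "j < 4" for j
  proof -
    have "r \<le> card (cut E ends {j, j+1, j+2})"
      using G that by (simp add: r_graph_def)
    then show ?thesis
      using by_ends[of "\<lambda>T. card (T \<inter> {j, j+1, j+2}) = 1"] by (simp add: cut_def)
  qed
  obtain L where "length L = r" "\<forall>M\<in>set L. disjoint M"
    "\<forall>T\<in>wagner_edges. card {e\<in>E. ends e = T} = length (filter (\<lambda>M. T \<in> M) L)"
    using wagner_weighting_decomposition[OF wagner_weighting_constraints[OF deg cut]] by blast
  then show thesis
    using that wagner by simp
qed

theorem corollary2p8:
  fixes V :: "'v set" and E :: "'e set" and ends :: "'e \<Rightarrow> 'v set" and r :: nat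
  assumes "r_graph r V E ends"
    and "underlying_is_wagner V E ends"
  shows "edge_chromatic_number E ends = r"
proof -
  have mg: "multigraph V E ends"
    using assms(1) by (simp add: r_graph_def)
  obtain f where f: "bij_betw f V {0..<8}" and wagner: "\<forall>e\<in>E. f ` ends e \<in> wagner_edges"
    using underlying_is_wagner_relabel[OF mg assms(2)] .
  obtain L where "length L = r" "\<forall>M\<in>set L. disjoint M"
    "\<And>e. e \<in> E \<Longrightarrow> card {e'\<in>E. f ` ends e' = f ` ends e} = length (filter (\<lambda>M. f ` ends e \<in> M) L)"
    using r_graph_wagner_matching_decomposition[OF r_graph_relabel[OF f assms(1)] wagner] by blast
  then obtain c where "proper_edge_colouring E (\<lambda>e. f ` ends e) c r"
    using mg proper_edge_colouring_from_matchings[of E L "\<lambda>e. f ` ends e"]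
    by (auto simp: multigraph_def)
  then have colouring: "proper_edge_colouring E ends c r"
    by (rule proper_edge_colouring_relabel)
  have "0 \<in> f ` V"
    using f by (simp add: bij_betw_def)
  then obtain v where "v \<in> V"
    by blast
  then have "degree E ends v = r"
    using assms(1) by (simp add: r_graph_def)
  with colouring show ?thesis
    by (rule edge_chromatic_number_eqI)
qed

end
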